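(* Fix $R>0$. Then $E_{\mathcal A}(n,R)$ and $E_{\mathcal D}(n,R)$ are defined for all sufficiently large $n$, and: 1. If $R\ge1$, then $\lim_{n\to\infty}E_{\mathcal A}(n,R)=\frac{(2R-1)(R+1)}{2R^2}$ and $\lim_{n\to\infty}E_{\mathcal D}(n,R)=\frac{R+1}{2R}$. 2. If $R\le1$, then $\lim_{n\to\infty}E_{\mathcal A}(n,R)=\frac{R+1}{2}$ and $\lim_{n\to\infty}E_{\mathcal D}(n,R)=\frac{(2-R)(R+1)}{2}$.
   Context: For $x,y>0$, $\mathrm{less}(x,y)=y(\lceil x/y\rceil-1)$ and $\mathrm{less}(x)=\mathrm{less}(x,1)$. For positive integers $n$ with $\frac1n<R\le n$, let $\ell_1=\mathrm{less}(2n-\frac2R+1)$ and $\ell_2=\min\{n,\lfloor n/R\rfloor\}$. For $\ell=1,\dots,n$, let $R_\ell=\mathrm{less}(R,\frac{2}{\ell(\ell+1)})$ and $f(\ell)=n-\ell+\frac{\ell(\ell+1)R_\ell}{2n}$. Let $\mathrm{equilibrium}(n,R)=\ell_1/n$ if $\frac1n<R\le\frac2{n+1}$, and $\mathrm{equilibrium}(n,R)=f(\ell_2)$ if $\frac2{n+1}<R\le n$. This is the optimal expected number of objects won by the adversary bidder, of budget $R\beta$, against the disadvantaged bidder, of budget $\beta$, in the two-bidder position-randomized auction with $n$ objects. Define the effective winning ratios $$E_{\mathcal A}(n,R)=\frac{\mathrm{equilibrium}(n,R)}{nR/(R+1)},\qquad E_{\mathcal D}(n,R)=\frac{n-\mathrm{equilibrium}(n,R)}{n/(R+1)}.$$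 *)

theory Defs
  imports Complex_Main
begin

definition less2 :: "real \<Rightarrow> real \<Rightarrow> real" where
  "less2 x y = y * (real_of_int (\<lceil>x / y\<rceil>) - 1)"

definition less1 :: "real \<Rightarrow> real" where
  "less1 x = less2 x 1"

definition ell1 :: "nat \<Rightarrow> real \<Rightarrow> real" where
  "ell1 n R = less1 (2 * real n - 2 / R + 1)"

definition ell2 :: "nat \<Rightarrow> real \<Rightarrow> nat" where
  "ell2 n R = min n (nat \<lfloor>real n / R\<rfloor>)"

definition R_ell :: "real \<Rightarrow> nat \<Rightarrow> real" where
  "R_ell R l = less2 R (2 / (real l * (real l + 1)))"

definition f_ell :: "nat \<Rightarrow> real \<Rightarrow> nat \<Rightarrow> real" where
  "f_ell n R l = real n - real l + real l * (real l + 1) * R_ell R l / (2 * real n)"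

text \<open>Defined only for positive n with 1/n < R \<le> n; outside this range the value is irrelevant.\<close>
definition equilibrium :: "nat \<Rightarrow> real \<Rightarrow> real" where
  "equilibrium n R =
     (if 1 / real n < R \<and> R \<le> 2 / (real n + 1) then ell1 n R / real n
      else f_ell n R (ell2 n R))"

definition E_A :: "nat \<Rightarrow> real \<Rightarrow> real" where
  "E_A n R = equilibrium n R / (real n * R / (R + 1))"

definition E_D :: "nat \<Rightarrow> real \<Rightarrow> real" where
  "E_D n R = (real n - equilibrium n R) / (real n / (R + 1))"

definition eq_domain :: "nat \<Rightarrow> real \<Rightarrow> bool" where
  "eq_domain n R \<longleftrightarrow> n > 0 \<and> 1 / real n < R \<and> R \<le> real n"

end

theory Submission
  imports Defs
begin

text \<open>Once n > 2/R the equilibrium is f_ell n R l with l = ell2 n R = min n \<lfloor>n/R\<rfloor>.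
  Since R - 2/(l(l+1)) \<le> R_ell R l < R, the rounding in R_ell changes f_ell n R l / n by at
  most 1/n^2, so equilibrium/n behaves like 1 - a + R a^2/2 with a = l/n \<rightarrow> min 1 (1/R).\<close>

lemma less2_bounds:
  assumes "y > 0"
  shows "x - y \<le> less2 x y \<and> less2 x y < x"
proof -
  have ceil: "x / y \<le> real_of_int \<lceil>x / y\<rceil>" "real_of_int \<lceil>x / y\<rceil> < x / y + 1"
    by linarith+
  have "x \<le> y * real_of_int \<lceil>x / y\<rceil>"
    using mult_left_mono[OF ceil(1), of y] assms by simp
  moreover have "y * real_of_int \<lceil>x / y\<rceil> < x + y"
    using mult_strict_left_mono[OF ceil(2) assms] assms by (simp add: algebra_simps)
  ultimately show ?thesis
    by (simp add: less2_def algebra_simps)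
qed

lemma R_ell_bounds:
  assumes "l > 0"
  shows "R - 2 / (real l * (real l + 1)) \<le> R_ell R l \<and> R_ell R l < R"
  unfolding R_ell_def by (rule less2_bounds) (use assms in simp)

lemma floor_mult_div_tendsto:
  "(\<lambda>n. real_of_int \<lfloor>c * real n\<rfloor> / real n) \<longlonglongrightarrow> c"
proof (rule LIM_zero_cancel, rule tendsto_0_le[OF lim_inverse_n', where K = 1])
  show "\<forall>\<^sub>F n in sequentially.
      norm (real_of_int \<lfloor>c * real n\<rfloor> / real n - c) \<le> norm (1 / real n) * 1"
    using eventually_gt_at_top[of "0::nat"]
  proof eventually_elim
    case (elim n)
    have "\<bar>real_of_int \<lfloor>c * real n\<rfloor> - c * real n\<bar> \<le> 1"
      by linarith
    then have "\<bar>real_of_int \<lfloor>c * real n\<rfloor> - c * real n\<bar> / real n \<le> 1 / real n"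
      by (simp add: divide_right_mono)
    moreover have "real_of_int \<lfloor>c * real n\<rfloor> / real n - c
        = (real_of_int \<lfloor>c * real n\<rfloor> - c * real n) / real n"
      using elim by (simp add: field_simps)
    ultimately show ?case
      by simp
  qed
qed

lemma ell2_div_tendsto:
  assumes "R > 0"
  shows "(\<lambda>n. real (ell2 n R) / real n) \<longlonglongrightarrow> min 1 (1 / R)"
proof (rule Lim_transform_eventually)
  show "(\<lambda>n. min 1 (real_of_int \<lfloor>(1 / R) * real n\<rfloor> / real n)) \<longlonglongrightarrow> min 1 (1 / R)"
    by (intro tendsto_min tendsto_const floor_mult_div_tendsto)
  show "\<forall>\<^sub>F n in sequentially.
      min 1 (real_of_int \<lfloor>(1 / R) * real n\<rfloor> / real n) = real (ell2 n R) / real n"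
    using eventually_gt_at_top[of "0::nat"]
    by eventually_elim (use assms in \<open>simp add: ell2_def min_divide_distrib_right of_nat_min\<close>)
qed

lemma eventually_real_gt: "\<forall>\<^sub>F n in sequentially. c < real n"
proof -
  obtain N :: nat where "c < real N"
    using reals_Archimedean2 by blast
  then show ?thesis
    by (intro eventually_sequentiallyI[of N]) (simp add: less_le_trans)
qed

lemma eventually_eq_domain:
  assumes "R > 0"
  shows "\<forall>\<^sub>F n in sequentially. eq_domain n R"
  using eventually_real_gt[of "max R (1 / R)"]
proof eventually_elim
  case (elim n)
  then have "n > 0" "1 / R < real n" "R < real n"
    using assms by (auto intro: le_less_trans[of 0 R])
  then show ?case
    using assms by (simp add: eq_domain_def field_simps)
qed

lemma eventually_equilibrium_eq_f_ell:
  assumes "R > 0"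
  shows "\<forall>\<^sub>F n in sequentially. equilibrium n R = f_ell n R (ell2 n R)"
  using eventually_real_gt[of "2 / R"]
proof eventually_elim
  case (elim n)
  then have "2 / (real n + 1) < R"
    using assms by (simp add: field_simps)
  then show ?case
    by (simp add: equilibrium_def)
qed

lemma eventually_ell2_pos:
  assumes "R > 0"
  shows "\<forall>\<^sub>F n in sequentially. ell2 n R > 0"
  using eventually_real_gt[of R]
proof eventually_elim
  case (elim n)
  then have "1 \<le> real n / R"
    using assms by simp
  then have "1 \<le> \<lfloor>real n / R\<rfloor>"
    by linarith
  then show ?case
    using elim assms by (simp add: ell2_def)
qed

lemma f_ell_div_approx:
  assumes "l > 0" "n > 0"
  shows "\<bar>f_ell n R l / real n - (1 - real l / real n
            + R * (real l / real n) * (real l / real n + 1 / real n) / 2)\<bar> \<le> 1 / real n ^ 2"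
proof -
  define p where "p = real l * (real l + 1)"
  have "p > 0"
    using assms by (simp add: p_def)
  have R_ell: "R - 2 / p \<le> R_ell R l" "R_ell R l < R"
    using R_ell_bounds[OF assms(1), of R] by (simp_all add: p_def)
  have "p * (R - R_ell R l) \<le> p * (2 / p)"
    using R_ell(1) \<open>p > 0\<close> by (intro mult_left_mono) simp_all
  then have "p * (R - R_ell R l) \<le> 2"
    using \<open>p > 0\<close> by simp
  moreover have "0 \<le> p * (R - R_ell R l)"
    using R_ell(2) \<open>p > 0\<close> by simp
  moreover have "f_ell n R l / real n - (1 - real l / real n
            + R * (real l / real n) * (real l / real n + 1 / real n) / 2)
      = - (p * (R - R_ell R l)) / (2 * real n ^ 2)"
    using assms by (simp add: f_ell_def p_def field_simps power2_eq_square)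
  moreover have "p * (R - R_ell R l) / (2 * real n ^ 2) \<le> 2 / (2 * real n ^ 2)"
    using calculation(1) by (rule divide_right_mono) simp
  ultimately show ?thesis
    by (simp add: abs_div)
qed

definition equilibrium_limit :: "real \<Rightarrow> real" where
  "equilibrium_limit R = 1 - min 1 (1 / R) + R * min 1 (1 / R) ^ 2 / 2"

lemma equilibrium_limit_ge_1: "R \<ge> 1 \<Longrightarrow> equilibrium_limit R = 1 - 1 / (2 * R)"
  by (simp add: equilibrium_limit_def power2_eq_square)

lemma equilibrium_limit_le_1: "0 < R \<Longrightarrow> R \<le> 1 \<Longrightarrow> equilibrium_limit R = R / 2"
  by (simp add: equilibrium_limit_def)

lemma equilibrium_div_tendsto:
  assumes "R > 0"
  shows "(\<lambda>n. equilibrium n R / real n) \<longlonglongrightarrow> equilibrium_limit R"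
proof -
  define a where "a n = real (ell2 n R) / real n" for n
  define approx where "approx n = 1 - a n + R * a n * (a n + 1 / real n) / 2" for n
  have "approx \<longlonglongrightarrow> 1 - min 1 (1 / R) + R * min 1 (1 / R) * (min 1 (1 / R) + 0) / 2"
    unfolding approx_def a_def
    by (intro tendsto_intros ell2_div_tendsto lim_inverse_n' assms) simp
  moreover have "(\<lambda>n. equilibrium n R / real n - approx n) \<longlonglongrightarrow> 0"
  proof (rule tendsto_0_le[OF lim_inverse_n', where K = 1])
    show "\<forall>\<^sub>F n in sequentially. norm (equilibrium n R / real n - approx n) \<le> norm (1 / real n) * 1"
      using eventually_equilibrium_eq_f_ell[OF assms] eventually_ell2_pos[OF assms]
        eventually_gt_at_top[of "0::nat"]
    proof eventually_elim
      case (elim n)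
      then have "\<bar>equilibrium n R / real n - approx n\<bar> \<le> 1 / real n ^ 2"
        using f_ell_div_approx[of "ell2 n R" n R] by (simp add: approx_def a_def)
      also have "\<dots> \<le> 1 / real n"
        using elim by (simp add: field_simps power2_eq_square)
      finally show ?case
        by simp
    qed
  qed
  ultimately have "(\<lambda>n. approx n + (equilibrium n R / real n - approx n))
      \<longlonglongrightarrow> 1 - min 1 (1 / R) + R * min 1 (1 / R) * (min 1 (1 / R) + 0) / 2 + 0"
    by (rule tendsto_add)
  then show ?thesis
    by (simp add: equilibrium_limit_def power2_eq_square mult.assoc)
qed

lemma E_A_tendsto:
  assumes "(\<lambda>n. equilibrium n R / real n) \<longlonglongrightarrow> L"
  shows "(\<lambda>n. E_A n R) \<longlonglongrightarrow> L * ((R + 1) / R)"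
proof -
  have "(\<lambda>n. equilibrium n R / real n * ((R + 1) / R)) \<longlonglongrightarrow> L * ((R + 1) / R)"
    by (intro tendsto_intros assms)
  then show ?thesis
    by (simp add: E_A_def)
qed

lemma E_D_tendsto:
  assumes "R > 0" "(\<lambda>n. equilibrium n R / real n) \<longlonglongrightarrow> L"
  shows "(\<lambda>n. E_D n R) \<longlonglongrightarrow> (1 - L) * (R + 1)"
proof (rule Lim_transform_eventually)
  show "(\<lambda>n. (1 - equilibrium n R / real n) * (R + 1)) \<longlonglongrightarrow> (1 - L) * (R + 1)"
    by (intro tendsto_intros assms)
  show "\<forall>\<^sub>F n in sequentially. (1 - equilibrium n R / real n) * (R + 1) = E_D n R"
    using eventually_gt_at_top[of "0::nat"]
    by eventually_elim (use assms in \<open>simp add: E_D_def field_simps\<close>)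
qed

theorem corollary1:
  fixes R :: real
  assumes "R > 0"
  shows "(\<forall>\<^sub>F n in sequentially. eq_domain n R)
    \<and> (R \<ge> 1 \<longrightarrow>
         (\<lambda>n. E_A n R) \<longlonglongrightarrow> (2 * R - 1) * (R + 1) / (2 * R^2) \<and>
         (\<lambda>n. E_D n R) \<longlonglongrightarrow> (R + 1) / (2 * R))
    \<and> (R \<le> 1 \<longrightarrow>
         (\<lambda>n. E_A n R) \<longlonglongrightarrow> (R + 1) / 2 \<and>
         (\<lambda>n. E_D n R) \<longlonglongrightarrow> (2 - R) * (R + 1) / 2)"
proof (intro conjI impI)
  note eq_lim = equilibrium_div_tendsto[OF assms]
  show "\<forall>\<^sub>F n in sequentially. eq_domain n R"
    by (rule eventually_eq_domain[OF assms])
  show "(\<lambda>n. E_A n R) \<longlonglongrightarrow> (2 * R - 1) * (R + 1) / (2 * R^2)" if "R \<ge> 1"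
    using that by (intro tendsto_eq_rhs[OF E_A_tendsto[OF eq_lim]])
      (simp add: equilibrium_limit_ge_1 field_simps power2_eq_square)
  show "(\<lambda>n. E_D n R) \<longlonglongrightarrow> (R + 1) / (2 * R)" if "R \<ge> 1"
    using that by (intro tendsto_eq_rhs[OF E_D_tendsto[OF assms eq_lim]])
      (simp add: equilibrium_limit_ge_1 field_simps)
  show "(\<lambda>n. E_A n R) \<longlonglongrightarrow> (R + 1) / 2" if "R \<le> 1"
    using that assms by (intro tendsto_eq_rhs[OF E_A_tendsto[OF eq_lim]])
      (simp add: equilibrium_limit_le_1)
  show "(\<lambda>n. E_D n R) \<longlonglongrightarrow> (2 - R) * (R + 1) / 2" if "R \<le> 1"
    using that assms by (intro tendsto_eq_rhs[OF E_D_tendsto[OF assms eq_lim]])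
      (simp add: equilibrium_limit_le_1 field_simps)
qed

end
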